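(* Let $C=(V_c,E_c)$ be a cactus graph and let $C_L=(V_c,L_c)$ be a link graph on the same vertex set, where $L_c\subseteq\binom{V_c}{2}$, $L_c\cap E_c=\emptyset$, and each link $l\in L_c$ has a cost $c(l)\in\mathbb{R}_{\ge 0}$. Suppose a feasible solution to the weighted connectivity augmentation problem (WCAP) on $C$ with link set $L_c$ exists. Then every minimum spanning forest $L_{MST}\subseteq L_c$ of $C_L$ (with respect to the costs $c$) is a feasible solution to the WCAP on $C$.
   Context: A cactus graph is a connected graph in which any two cycles have at most one vertex in common; it may carry positive edge weights. A cut of a graph is a bipartition of its vertex set into two non-empty parts; its weight is the total weight of edges with one endpoint in each part, and a minimum cut is a cut of minimum weight. A link $l=uv$ covers a cut if $u$ and $v$ lie on different sides of it (equivalently, adding $l$ to the graph increases the weight of that cut). For the WCAP on $C$ with link set $L_c$, a set $S\subseteq L_c$ is a feasible solution (an augmentation) if adding the links of $S$ to $C$ increases its edge connectivity, i.e. every minimum cut of $C$ is covered by at least one link of $S$. A minimum spanning forest of $C_L$ is a minimum-cost subset of $L_c$ forming a spanning tree of each connected component of $C_L$. *)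

theory Defs
  imports Complex_Main
begin

definition graph :: "'a set \<Rightarrow> 'a set set \<Rightarrow> bool" where
  "graph V E \<longleftrightarrow> finite V \<and> (\<forall>e\<in>E. \<exists>u v. e = {u, v} \<and> u \<noteq> v \<and> u \<in> V \<and> v \<in> V)"

definition reach :: "'a set \<Rightarrow> 'a set set \<Rightarrow> 'a \<Rightarrow> 'a \<Rightarrow> bool" where
  "reach V E u v \<longleftrightarrow> (u, v) \<in> {(x, y). x \<in> V \<and> y \<in> V \<and> {x, y} \<in> E}\<^sup>*"

definition connected_graph :: "'a set \<Rightarrow> 'a set set \<Rightarrow> bool" where
  "connected_graph V E \<longleftrightarrow> V \<noteq> {} \<and> (\<forall>u\<in>V. \<forall>v\<in>V. reach V E u v)"

definition is_cycle :: "'a set set \<Rightarrow> 'a list \<Rightarrow> bool" where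
  "is_cycle E xs \<longleftrightarrow> length xs \<ge> 3 \<and> distinct xs \<and>
     (\<forall>i < length xs. {xs ! i, xs ! ((i + 1) mod length xs)} \<in> E)"

definition cycle_edges :: "'a list \<Rightarrow> 'a set set" where
  "cycle_edges xs = {{xs ! i, xs ! ((i + 1) mod length xs)} | i. i < length xs}"

definition cactus :: "'a set \<Rightarrow> 'a set set \<Rightarrow> bool" where
  "cactus V E \<longleftrightarrow> graph V E \<and> connected_graph V E \<and>
     (\<forall>xs ys. is_cycle E xs \<and> is_cycle E ys \<and> cycle_edges xs \<noteq> cycle_edges ys
        \<longrightarrow> card (set xs \<inter> set ys) \<le> 1)"

text \<open>A cut is represented by one side X of the bipartition (X, V - X).\<close>

definition is_cut :: "'a set \<Rightarrow> 'a set \<Rightarrow> bool" where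
  "is_cut V X \<longleftrightarrow> X \<subseteq> V \<and> X \<noteq> {} \<and> X \<noteq> V"

definition crosses :: "'a set \<Rightarrow> 'a set \<Rightarrow> 'a set \<Rightarrow> bool" where
  "crosses V X e \<longleftrightarrow> (\<exists>u v. e = {u, v} \<and> u \<in> X \<and> v \<in> V - X)"

definition cut_weight :: "'a set \<Rightarrow> 'a set set \<Rightarrow> ('a set \<Rightarrow> real) \<Rightarrow> 'a set \<Rightarrow> real" where
  "cut_weight V E w X = (\<Sum>e \<in> {e \<in> E. crosses V X e}. w e)"

definition min_cut :: "'a set \<Rightarrow> 'a set set \<Rightarrow> ('a set \<Rightarrow> real) \<Rightarrow> 'a set \<Rightarrow> bool" where
  "min_cut V E w X \<longleftrightarrow> is_cut V X \<and>
     (\<forall>Y. is_cut V Y \<longrightarrow> cut_weight V E w X \<le> cut_weight V E w Y)"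

text \<open>A link l covers the cut X iff its endpoints lie on different sides.\<close>

definition wcap_feasible ::
  "'a set \<Rightarrow> 'a set set \<Rightarrow> ('a set \<Rightarrow> real) \<Rightarrow> 'a set set \<Rightarrow> 'a set set \<Rightarrow> bool" where
  "wcap_feasible V E w L S \<longleftrightarrow> S \<subseteq> L \<and>
     (\<forall>X. min_cut V E w X \<longrightarrow> (\<exists>l\<in>S. crosses V X l))"

definition forest :: "'a set set \<Rightarrow> bool" where
  "forest F \<longleftrightarrow> \<not> (\<exists>xs. is_cycle F xs)"

definition spanning_forest :: "'a set \<Rightarrow> 'a set set \<Rightarrow> 'a set set \<Rightarrow> bool" where
  "spanning_forest V L F \<longleftrightarrow> F \<subseteq> L \<and> forest F \<and>
     (\<forall>u\<in>V. \<forall>v\<in>V. reach V L u v \<longleftrightarrow> reach V F u v)"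

definition min_spanning_forest ::
  "'a set \<Rightarrow> 'a set set \<Rightarrow> ('a set \<Rightarrow> real) \<Rightarrow> 'a set set \<Rightarrow> bool" where
  "min_spanning_forest V L c F \<longleftrightarrow> spanning_forest V L F \<and>
     (\<forall>F'. spanning_forest V L F' \<longrightarrow> sum c F \<le> sum c F')"

end

theory Submission
  imports Defs
begin

text \<open>Every spanning forest of the link graph covers every cut that some link covers: the
  endpoints of such a link lie in one component of the link graph, hence are joined by a path in
  the forest, and that path must leave the side of the cut it starts on.  So a spanning forest is
  feasible whenever any augmentation is; neither the costs nor the cactus structure matter.\<close>

lemma reach_crosses:
  assumes "reach V F u v" and "u \<in> X" and "v \<notin> X"
  shows "\<exists>e\<in>F. crosses V X e"
proof -
  have "(u, v) \<in> {(x, y). x \<in> V \<and> y \<in> V \<and> {x, y} \<in> F}\<^sup>*"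
    using assms(1) unfolding reach_def .
  then have "v \<in> X \<or> (\<exists>e\<in>F. crosses V X e)"
  proof (induction rule: rtrancl_induct)
    case base
    show ?case using \<open>u \<in> X\<close> by simp
  next
    case (step y z)
    have "crosses V X {y, z}" if "y \<in> X" "z \<notin> X"
      using that step.hyps(2) unfolding crosses_def by blast
    then show ?case using step.IH step.hyps(2) by blast
  qed
  then show ?thesis using \<open>v \<notin> X\<close> by simp
qed

lemma spanning_forest_crosses:
  assumes "spanning_forest V L F" and "X \<subseteq> V" and "l \<in> L" and "crosses V X l"
  shows "\<exists>e\<in>F. crosses V X e"
proof -
  obtain u v where "l = {u, v}" "u \<in> X" "v \<in> V - X"
    using \<open>crosses V X l\<close> unfolding crosses_def by blast
  moreover have "u \<in> V" "v \<in> V"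
    using \<open>u \<in> X\<close> \<open>v \<in> V - X\<close> assms(2) by auto
  ultimately have "reach V L u v"
    using \<open>l \<in> L\<close> unfolding reach_def by (simp add: r_into_rtrancl)
  moreover have "reach V L u v \<longleftrightarrow> reach V F u v"
    using assms(1) \<open>u \<in> V\<close> \<open>v \<in> V\<close> unfolding spanning_forest_def by simp
  ultimately show ?thesis
    using reach_crosses[of V F u v X] \<open>u \<in> X\<close> \<open>v \<in> V - X\<close> by simp
qed

lemma wcap_feasible_spanning_forest:
  assumes "wcap_feasible V E w L S" and "spanning_forest V L F"
  shows "wcap_feasible V E w L F"
  unfolding wcap_feasible_def
proof (intro conjI allI impI)
  show "F \<subseteq> L"
    using assms(2) unfolding spanning_forest_def by blast
next
  fix X
  assume "min_cut V E w X"
  then have "X \<subseteq> V" and "\<exists>l\<in>S. crosses V X l"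
    using assms(1) unfolding min_cut_def is_cut_def wcap_feasible_def by auto
  moreover have "S \<subseteq> L"
    using assms(1) unfolding wcap_feasible_def by blast
  ultimately show "\<exists>e\<in>F. crosses V X e"
    using spanning_forest_crosses[OF assms(2)] by blast
qed

theorem theorem2:
  fixes V :: "'a set" and E L F :: "'a set set"
    and w c :: "'a set \<Rightarrow> real"
  assumes "cactus V E"
    and "\<forall>e\<in>E. w e > 0"
    and "graph V L"
    and "L \<inter> E = {}"
    and "\<forall>l\<in>L. c l \<ge> 0"
    and "\<exists>S. wcap_feasible V E w L S"
    and "min_spanning_forest V L c F"
  shows "wcap_feasible V E w L F"
proof -
  obtain S where "wcap_feasible V E w L S"
    using assms(6) by blast
  moreover have "spanning_forest V L F"
    using assms(7) unfolding min_spanning_forest_def by blast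
  ultimately show ?thesis
    by (rule wcap_feasible_spanning_forest)
qed

end
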